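(* Let $n,m$ be positive integers, $\lambda=(\lambda_1,\dots,\lambda_n)\in\mathcal{P}^m_n$, and let $k_{i,j}=k_{i,j}(\lambda)$ be defined recursively by $$k_{i,j}=\min\left\{m,\left\lceil\frac{\lambda_i-\sum_{\ell=j+1}^n k_{i,\ell}+\sum_{\ell=i+1}^j k_{\ell,j}}{j-i+1}\right\rceil\right\},\quad 1\le i\le j\le n.$$ Then $\lambda_i=\sum_{j=i}^n k_{i,j}$ for every $i\in\{1,\dots,n\}$.
   Context: $\mathcal{P}^m_n$ is the set of integer partitions $(\lambda_1\ge\cdots\ge\lambda_n\ge0)$ with $\lambda_i\le m(n-i+1)$ for all $i$. The recursion is carried out in order of decreasing $i$ and, for fixed $i$, decreasing $j$. *)

theory Defs
  imports Main "HOL.Real"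
begin

text \<open>Partitions are represented 1-indexed as functions lam :: nat => nat;
  only the values lam 1, ..., lam n are relevant.\<close>

definition in_P :: "nat \<Rightarrow> nat \<Rightarrow> (nat \<Rightarrow> nat) \<Rightarrow> bool" where
  "in_P m n lam \<longleftrightarrow>
     (\<forall>i j. 1 \<le> i \<longrightarrow> i \<le> j \<longrightarrow> j \<le> n \<longrightarrow> lam j \<le> lam i) \<and>
     (\<forall>i. 1 \<le> i \<longrightarrow> i \<le> n \<longrightarrow> lam i \<le> m * (n - i + 1))"

function kk :: "nat \<Rightarrow> nat \<Rightarrow> (nat \<Rightarrow> nat) \<Rightarrow> nat \<Rightarrow> nat \<Rightarrow> int" where
  "kk m n lam i j =
     (if 1 \<le> i \<and> i \<le> j \<and> j \<le> n then
        min (int m)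
          \<lceil>(real (lam i) - (\<Sum>l\<in>{j+1..n}. real_of_int (kk m n lam i l))
             + (\<Sum>l\<in>{i+1..j}. real_of_int (kk m n lam l j)))
           / real (j - i + 1)\<rceil>
      else 0)"
  by pat_completeness auto
termination
  by (relation "measures [\<lambda>(m,n,lam,i,j). n + 1 - i, \<lambda>(m,n,lam,i,j). n + 1 - j]") auto

end

theory Submission
  imports Defs
begin

text \<open>Rows are handled from the bottom up. Let \<open>residual i j = \<lambda>_i - \<Sum>_{l>j} k_{i,l}\<close> be what
  remains of \<open>\<lambda>_i\<close> once the entries right of column \<open>j\<close> are placed. If all lower rows
  decompose into nonnegative entries, comparing the recursions of rows \<open>i\<close> and \<open>i+1\<close> column
  by column (starting from \<open>\<lambda>_{i+1} \<le> \<lambda>_i\<close>) gives \<open>0 \<le> residual (i+1) j \<le> residual i j\<close>,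
  so all entries of row \<open>i\<close> are nonnegative; and \<open>\<lambda>_i \<le> m (n-i+1)\<close> propagates to
  \<open>residual i j \<le> m (j-i+1)\<close>. At \<open>j = i\<close> this says \<open>residual i i \<le> m\<close>, so the diagonal
  entry is exactly \<open>residual i i\<close> and row \<open>i\<close> sums to \<open>\<lambda>_i\<close>.\<close>

lemma ceiling_divide_le_iff:
  assumes "d > 0"
  shows "\<lceil>real_of_int x / real d\<rceil> \<le> b \<longleftrightarrow> x \<le> int d * b"
proof -
  have "\<lceil>real_of_int x / real d\<rceil> \<le> b \<longleftrightarrow> real_of_int x \<le> real d * real_of_int b"
    using assms by (simp add: ceiling_le_iff pos_divide_le_eq mult.commute)
  also have "\<dots> \<longleftrightarrow> x \<le> int d * b"
    by (metis of_int_le_iff of_int_mult of_int_of_nat_eq)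
  finally show ?thesis .
qed

lemma le_mult_ceiling_divide:
  assumes "d > 0"
  shows "x \<le> int d * \<lceil>real_of_int x / real d\<rceil>"
  using ceiling_divide_le_iff[OF assms] by blast

lemma ceiling_divide_nonneg:
  assumes "x \<ge> 0"
  shows "\<lceil>real_of_int x / real d\<rceil> \<ge> 0"
proof -
  have "0 \<le> real_of_int x / real d"
    using assms by simp
  then show ?thesis by linarith
qed

lemma diff_min_ceiling_mono:
  fixes R S c a k mm :: int and d :: nat
  assumes "d \<ge> 1" "S \<le> R"
    and a: "a = min mm \<lceil>real_of_int (S + c) / real d\<rceil>"
    and k: "k = min mm \<lceil>real_of_int (R + (a + c)) / real (d + 1)\<rceil>"
  shows "S - a \<le> R - k"
proof (cases "k \<le> a")
  case False
  then have "a = \<lceil>real_of_int (S + c) / real d\<rceil>"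
    using a k by auto
  then have "S + c \<le> int d * a"
    using le_mult_ceiling_divide[of d "S + c"] assms(1) by simp
  then have "R + (a + c) \<le> int (d + 1) * (a + (R - S))"
    using assms(2) mult_left_mono[of S R "int d"] by (simp add: algebra_simps)
  then have "\<lceil>real_of_int (R + (a + c)) / real (d + 1)\<rceil> \<le> a + (R - S)"
    by (subst ceiling_divide_le_iff) auto
  then have "k \<le> a + (R - S)"
    using k by (simp add: min_le_iff_disj)
  then show ?thesis by simp
qed (use assms in simp)

lemma diff_min_ceiling_bound:
  fixes R c k mm :: int and d :: nat
  assumes "d \<ge> 1" "0 \<le> R" "0 \<le> c" "R \<le> mm * int (d + 1)"
    and k: "k = min mm \<lceil>real_of_int (R + c) / real (d + 1)\<rceil>"
  shows "R - k \<le> mm * int d"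
proof (cases "k = mm")
  case False
  then have "R + c \<le> int (d + 1) * k"
    using k le_mult_ceiling_divide[of "d + 1" "R + c"] by (simp add: min_def split: if_splits)
  then have "int (d + 1) * (R - k) \<le> int d * R"
    using assms(3) by (simp add: algebra_simps)
  also have "\<dots> \<le> int d * (mm * int (d + 1))"
    using assms(4) by (simp add: mult_left_mono)
  also have "\<dots> = int (d + 1) * (mm * int d)"
    by (simp add: algebra_simps)
  finally show ?thesis
    by (rule mult_left_le_imp_le) simp
qed (use assms(4) in \<open>simp add: algebra_simps\<close>)

lemma sum_atLeastAtMost_split:
  fixes f :: "nat \<Rightarrow> int"
  assumes "a \<le> j + 1" "j \<le> n"
  shows "(\<Sum>l\<in>{a..n}. f l) = (\<Sum>l\<in>{a..j}. f l) + (\<Sum>l\<in>{j+1..n}. f l)"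
  using sum.ub_add_nat[of a j f "n - j"] assms by simp

declare kk.simps [simp del]

locale kk_partition =
  fixes m n :: nat and lam :: "nat \<Rightarrow> nat"
  assumes in_P: "in_P m n lam"
begin

abbreviation k :: "nat \<Rightarrow> nat \<Rightarrow> int" where
  "k \<equiv> kk m n lam"

definition residual :: "nat \<Rightarrow> nat \<Rightarrow> int" where
  "residual i j = int (lam i) - (\<Sum>l\<in>{j+1..n}. k i l)"

definition column_sum :: "nat \<Rightarrow> nat \<Rightarrow> int" where
  "column_sum i j = (\<Sum>l\<in>{i+1..j}. k l j)"

definition row_decomposes :: "nat \<Rightarrow> bool" where
  "row_decomposes i \<longleftrightarrow> (\<forall>j\<in>{i..n}. 0 \<le> k i j) \<and> int (lam i) = (\<Sum>j\<in>{i..n}. k i j)"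

lemma lam_antimono: "1 \<le> i \<Longrightarrow> i < n \<Longrightarrow> lam (i + 1) \<le> lam i"
  using in_P unfolding in_P_def by auto

lemma lam_bound: "1 \<le> i \<Longrightarrow> i \<le> n \<Longrightarrow> int (lam i) \<le> int m * int (n - i + 1)"
  using in_P unfolding in_P_def by (metis of_nat_le_iff of_nat_mult)

lemma k_eq:
  assumes "1 \<le> i" "i \<le> j" "j \<le> n"
  shows "k i j = min (int m) \<lceil>real_of_int (residual i j + column_sum i j) / real (j - i + 1)\<rceil>"
  using assms by (subst kk.simps) (simp add: residual_def column_sum_def of_int_sum)

lemma residual_last: "residual i n = int (lam i)"
  by (simp add: residual_def)

lemma residual_Suc: "j < n \<Longrightarrow> residual i j = residual i (j + 1) - k i (j + 1)"
  by (simp add: residual_def sum.atLeast_Suc_atMost)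

lemma column_sum_Suc: "i + 1 \<le> j \<Longrightarrow> column_sum i j = k (i + 1) j + column_sum (i + 1) j"
  by (simp add: column_sum_def sum.atLeast_Suc_atMost)

lemma column_sum_diag: "column_sum i i = 0"
  by (simp add: column_sum_def)

lemma residual_next_row_le:
  assumes "1 \<le> i" "i < n" "i \<le> j" "j \<le> n"
  shows "residual (i + 1) j \<le> residual i j"
  using assms(4,3)
proof (induction j rule: inc_induct)
  case base
  show ?case using lam_antimono[OF assms(1,2)] by (simp add: residual_last)
next
  case (step j)
  define d where "d = j + 1 - i"
  have "d \<ge> 1" "j + 1 - (i + 1) + 1 = d" "j + 1 - i + 1 = d + 1"
    using step d_def by auto
  moreover have "column_sum i (j + 1) = k (i + 1) (j + 1) + column_sum (i + 1) (j + 1)"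
    using step by (intro column_sum_Suc) simp
  ultimately have "residual (i + 1) (j + 1) - k (i + 1) (j + 1) \<le> residual i (j + 1) - k i (j + 1)"
    using step assms(1) k_eq[of "i + 1" "j + 1"] k_eq[of i "j + 1"]
    by (intro diff_min_ceiling_mono[where c = "column_sum (i + 1) (j + 1)"]) auto
  then show ?case using step by (simp add: residual_Suc)
qed

lemma residual_eq_partial_row_sum:
  assumes "row_decomposes i" "i \<le> j + 1" "j \<le> n"
  shows "residual i j = (\<Sum>l\<in>{i..j}. k i l)"
  using assms sum_atLeastAtMost_split[of i j n "k i"]
  unfolding row_decomposes_def residual_def by simp

lemma residual_nonneg:
  assumes "1 \<le> i" "i \<le> j" "j \<le> n" "i < n \<Longrightarrow> row_decomposes (i + 1)"
  shows "0 \<le> residual i j"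
proof (cases "i < n")
  case True
  have "0 \<le> (\<Sum>l\<in>{i+1..j}. k (i + 1) l)"
    using assms(3,4) True by (intro sum_nonneg) (auto simp: row_decomposes_def)
  also have "\<dots> = residual (i + 1) j"
    using assms True by (simp add: residual_eq_partial_row_sum)
  also have "\<dots> \<le> residual i j"
    using assms True by (intro residual_next_row_le)
  finally show ?thesis .
next
  case False
  then have "j = n"
    using assms by simp
  then show ?thesis by (simp add: residual_last)
qed

lemma column_sum_nonneg:
  assumes "j \<le> n" "\<forall>l\<in>{i<..n}. row_decomposes l"
  shows "0 \<le> column_sum i j"
  using assms unfolding column_sum_def row_decomposes_def by (intro sum_nonneg) auto

lemma residual_le:
  assumes "1 \<le> i" "i \<le> j" "j \<le> n" "\<forall>l\<in>{i<..n}. row_decomposes l"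
  shows "residual i j \<le> int m * int (j - i + 1)"
  using assms(3,2)
proof (induction j rule: inc_induct)
  case base
  show ?case using lam_bound assms(1,2,3) by (simp add: residual_last)
next
  case (step j)
  have "0 \<le> residual i (j + 1)"
    using assms step by (intro residual_nonneg) auto
  moreover have "0 \<le> column_sum i (j + 1)"
    using assms(4) step by (intro column_sum_nonneg) auto
  moreover have "j + 1 - i + 1 = (j - i + 1) + 1"
    using step by simp
  ultimately have "residual i (j + 1) - k i (j + 1) \<le> int m * int (j - i + 1)"
    using step assms(1) k_eq[of i "j + 1"] by (intro diff_min_ceiling_bound) auto
  then show ?case using step by (simp add: residual_Suc)
qed

lemma row_decomposes_if_lower_rows:
  assumes "1 \<le> i" "i \<le> n" "\<forall>l\<in>{i<..n}. row_decomposes l"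
  shows "row_decomposes i"
proof -
  have entry_nonneg: "0 \<le> k i j" if "i \<le> j" "j \<le> n" for j
  proof -
    have "0 \<le> residual i j + column_sum i j"
      using assms that residual_nonneg[of i j] column_sum_nonneg[of j i] by auto
    then have "0 \<le> \<lceil>real_of_int (residual i j + column_sum i j) / real (j - i + 1)\<rceil>"
      by (rule ceiling_divide_nonneg)
    then show ?thesis
      using k_eq[of i j] assms(1) that by simp
  qed
  have "k i i = residual i i"
    using k_eq[of i i] residual_le[of i i] assms by (simp add: column_sum_diag)
  then have "(\<Sum>j\<in>{i..n}. k i j) = int (lam i)"
    using assms(2) by (simp add: sum.atLeast_Suc_atMost residual_def)
  then show ?thesis
    using entry_nonneg by (simp add: row_decomposes_def)
qed

lemma rows_decompose:
  assumes "1 \<le> i" "i \<le> n + 1"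
  shows "\<forall>l\<in>{i..n}. row_decomposes l"
  using assms(2)
proof (induction rule: inc_induct)
  case (step l)
  then have "\<forall>l'\<in>{l<..n}. row_decomposes l'"
    by (auto simp: Suc_le_eq)
  moreover have "row_decomposes l"
    using step assms(1) calculation by (intro row_decomposes_if_lower_rows) auto
  ultimately show ?case
    by (metis atLeastAtMost_iff greaterThanAtMost_iff le_neq_implies_less)
qed simp

end

theorem corollary4p4:
  fixes n m :: nat and lam :: "nat \<Rightarrow> nat"
  assumes "n \<ge> 1" and "m \<ge> 1" and "in_P m n lam"
  shows "\<forall>i\<in>{1..n}. int (lam i) = (\<Sum>j\<in>{i..n}. kk m n lam i j)"
proof -
  interpret kk_partition m n lam
    using assms(3) by unfold_locales
  show ?thesis
    using rows_decompose[of 1] by (simp add: row_decomposes_def)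
qed

end
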